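(* Let $L/L^G$ be a Galois extension of number fields with Galois group $G$, and let $w_L$ be the order of the group $\mu(L)$ of roots of unity in $L$. Fix a prime $p\mid w_L$ and let $S_p$ be the set of subgroups $H\le G$ with $p\nmid|H|$. For $H\le G$ let $\nu(H,p)$ be the $p$-adic valuation of the order $w_{L^H}$ of the group of roots of unity of the fixed field $L^H$. If $(n_H)_{H\in S_p}$ are integers with $\sum_{H\in S_p}n_H\varepsilon_H=0$ in $\mathbb{Q}[G]$, then $\sum_{H\in S_p}n_H\nu(H,p)=0$.
   Context: $\varepsilon_H=\frac1{|H|}\sum_{h\in H}h$ is the norm idempotent of $H$. *)

theory Defs
  imports Complex_Main "HOL-Computational_Algebra.Primes"
begin

text \<open>Number fields are modelled as subfields of the complex numbers that are
finite-dimensional over the rationals.\<close>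

definition is_subfield :: "complex set \<Rightarrow> bool" where
  "is_subfield K \<longleftrightarrow> 0 \<in> K \<and> 1 \<in> K \<and>
     (\<forall>x\<in>K. \<forall>y\<in>K. x + y \<in> K \<and> x - y \<in> K \<and> x * y \<in> K) \<and>
     (\<forall>x\<in>K. x \<noteq> 0 \<longrightarrow> inverse x \<in> K)"

definition number_field :: "complex set \<Rightarrow> bool" where
  "number_field K \<longleftrightarrow> is_subfield K \<and>
     (\<exists>B. finite B \<and> B \<subseteq> K \<and>
        (\<forall>x\<in>K. \<exists>c. (\<forall>b\<in>B. c b \<in> \<rat>) \<and> x = (\<Sum>b\<in>B. c b * b)))"

text \<open>A field automorphism of K, represented as a map on the complex numbers
that is the identity outside K.\<close>

definition field_aut :: "complex set \<Rightarrow> (complex \<Rightarrow> complex) \<Rightarrow> bool" where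
  "field_aut K \<sigma> \<longleftrightarrow> bij_betw \<sigma> K K \<and> (\<forall>x. x \<notin> K \<longrightarrow> \<sigma> x = x) \<and>
     (\<forall>x\<in>K. \<forall>y\<in>K. \<sigma> (x + y) = \<sigma> x + \<sigma> y \<and> \<sigma> (x * y) = \<sigma> x * \<sigma> y) \<and> \<sigma> 1 = 1"

definition aut_group :: "complex set \<Rightarrow> (complex \<Rightarrow> complex) set \<Rightarrow> bool" where
  "aut_group K G \<longleftrightarrow> finite G \<and> (\<forall>\<sigma>\<in>G. field_aut K \<sigma>) \<and> id \<in> G \<and>
     (\<forall>\<sigma>\<in>G. \<forall>\<tau>\<in>G. \<sigma> \<circ> \<tau> \<in> G) \<and> (\<forall>\<sigma>\<in>G. \<exists>\<tau>\<in>G. \<tau> \<circ> \<sigma> = id)"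

definition subgroup_of :: "(complex \<Rightarrow> complex) set \<Rightarrow> (complex \<Rightarrow> complex) set \<Rightarrow> bool" where
  "subgroup_of H G \<longleftrightarrow> H \<subseteq> G \<and> id \<in> H \<and>
     (\<forall>\<sigma>\<in>H. \<forall>\<tau>\<in>H. \<sigma> \<circ> \<tau> \<in> H) \<and> (\<forall>\<sigma>\<in>H. \<exists>\<tau>\<in>H. \<tau> \<circ> \<sigma> = id)"

definition fixed_field :: "complex set \<Rightarrow> (complex \<Rightarrow> complex) set \<Rightarrow> complex set" where
  "fixed_field K H = {x \<in> K. \<forall>\<sigma>\<in>H. \<sigma> x = x}"

definition roots_of_unity :: "complex set \<Rightarrow> complex set" where
  "roots_of_unity K = {x \<in> K. \<exists>n::nat. n > 0 \<and> x ^ n = 1}"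

definition w_ord :: "complex set \<Rightarrow> nat" where
  "w_ord K = card (roots_of_unity K)"

text \<open>Coefficient function of the norm idempotent eps_H in Q[G]
  (an element of Q[G] is identified with its coefficient function G \<rightarrow> Q).\<close>
definition norm_idem :: "(complex \<Rightarrow> complex) set \<Rightarrow> (complex \<Rightarrow> complex) \<Rightarrow> rat" where
  "norm_idem H g = (if g \<in> H then 1 / of_nat (card H) else 0)"

end

(* Let p^a be the exact power of p dividing w_L and let zeta, eta be primitive p^a-th and p-th roots
   of unity; both lie in L. An automorphism sigma of order r prime to p sends zeta to zeta^k; if sigma
   fixes eta = zeta^(p^(a-1)) then k = 1 mod p, and k^r = 1 mod p^a then forces k = 1 mod p^a.
   Hence for H in S_p the p-part of w_(L^H) is p^a if H fixes eta and 1 otherwise, i.e.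
   nu(H, p) = a [H fixes eta]. The group G acts on the p-th roots of unity through the cyclic group
   (Z/p)^*, so there is a linear character omega of G whose kernel is the stabiliser of eta, and
   omega(eps_H) = [H <= ker omega]. Applying omega to sum n_H eps_H = 0 gives the claim.
   That mu(L) is finite, without which w_L would be the junk value card = 0, is Kronecker's
   argument: a root of unity in L is a root of an integer factor of some X^N - 1 of degree at most
   [L : Q], and such factors have coefficients bounded by 2^[L : Q]. *)
theory Submission
  imports Defs "HOL-Number_Theory.Number_Theory" "HOL-Algebra.Multiplicative_Group"
    "Berlekamp_Zassenhaus.Factor_Bound"
begin

lemma cis_pow_eq_iff:
  fixes N :: nat
  assumes N: "N > 0"
  shows "cis (2 * pi / N) ^ i = cis (2 * pi / N) ^ j \<longleftrightarrow> i mod N = j mod N"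
proof -
  let ?z = "cis (2 * pi / N)"
  have pow_mod: "?z ^ i = cis (2 * pi * real (i mod N) / real N)" for i
  proof -
    have "?z ^ i = (?z ^ N) ^ (i div N) * ?z ^ (i mod N)"
      by (metis power_add power_mult mult_div_mod_eq)
    also have "?z ^ N = 1" using N by (simp add: DeMoivre)
    finally show ?thesis by (simp add: DeMoivre mult_ac)
  qed
  have "inj_on (\<lambda>k. cis (2 * pi * real k / real N)) {..<N}"
    using bij_betw_roots_unity[OF N] by (simp add: bij_betw_def)
  then show ?thesis
    unfolding pow_mod using N by (auto simp: inj_on_def)
qed

lemma cis_pow_eq_1_iff: "(N::nat) > 0 \<Longrightarrow> cis (2 * pi / N) ^ i = 1 \<longleftrightarrow> N dvd i"
  using cis_pow_eq_iff[of N i 0] by (simp add: mod_eq_0_iff_dvd)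

lemma cis_pow_cong_iff:
  "(N::nat) > 0 \<Longrightarrow> cis (2 * pi / N) ^ i = cis (2 * pi / N) ^ j \<longleftrightarrow> [i = j] (mod N)"
  by (simp add: cis_pow_eq_iff cong_def)

lemma root_unity_eq_cis_pow:
  fixes N :: nat
  assumes N: "N > 0" and "z ^ N = 1"
  obtains k where "z = cis (2 * pi / N) ^ k"
proof -
  obtain k where "z = cis (2 * pi * real k / real N)"
    using bij_betw_roots_unity[OF N] assms(2) by (auto simp: bij_betw_def)
  then show ?thesis using that[of k] by (simp add: DeMoivre mult_ac)
qed

text \<open>Multiplication by x \<in> S permutes S and so fixes the product of its elements, whence
  x ^ card S = 1; and there are exactly card S such roots.\<close>
lemma finite_mult_closed_eq_roots_unity:
  fixes S :: "complex set"
  assumes fin: "finite S" and "1 \<in> S" and "0 \<notin> S"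
    and mult: "\<And>x y. x \<in> S \<Longrightarrow> y \<in> S \<Longrightarrow> x * y \<in> S"
  shows "S = {z. z ^ card S = 1}"
proof -
  have pos: "card S > 0" using assms by (auto simp: card_gt_0_iff)
  have "x ^ card S = 1" if x: "x \<in> S" for x
  proof -
    have inj: "inj_on ((*) x) S" using x \<open>0 \<notin> S\<close> by (auto simp: inj_on_def)
    have "(*) x ` S = S"
      using endo_inj_surj[OF fin _ inj] mult x by blast
    then have "prod id S = prod ((*) x) S"
      using prod.reindex[OF inj, of id] by simp
    also have "\<dots> = x ^ card S * prod id S" by (simp add: prod.distrib)
    finally show ?thesis using fin \<open>0 \<notin> S\<close> by auto
  qed
  then have "S \<subseteq> {z. z ^ card S = 1}" by blast
  moreover have "card S = card {z::complex. z ^ card S = 1}"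
    using card_roots_unity_eq[OF pos] by simp
  ultimately show ?thesis
    using pos by (intro card_subset_eq finite_roots_unity) auto
qed

lemma roots_of_unity_mult_closed:
  assumes "\<And>x y. x \<in> K \<Longrightarrow> y \<in> K \<Longrightarrow> x * y \<in> K"
    and "x \<in> roots_of_unity K" and "y \<in> roots_of_unity K"
  shows "x * y \<in> roots_of_unity K"
proof -
  obtain n m where "n > 0" "x ^ n = 1" "m > 0" "y ^ m = 1" "x \<in> K" "y \<in> K"
    using assms(2,3) by (auto simp: roots_of_unity_def)
  moreover have "(x * y) ^ (n * m) = (x ^ n) ^ m * (y ^ m) ^ n"
    by (simp add: power_mult_distrib flip: power_mult) (simp add: mult.commute)
  ultimately have "(x * y) ^ (n * m) = 1" by simp
  with \<open>n > 0\<close> \<open>m > 0\<close> \<open>x \<in> K\<close> \<open>y \<in> K\<close> show ?thesis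
    using assms(1) by (auto simp: roots_of_unity_def intro!: exI[of _ "n * m"])
qed

lemma one_mem_roots_of_unity: "1 \<in> K \<Longrightarrow> 1 \<in> roots_of_unity K"
  by (auto simp: roots_of_unity_def intro: exI[of _ 1])

lemma roots_of_unity_eq_roots_w_ord:
  assumes "finite (roots_of_unity K)" "1 \<in> K" "\<And>x y. x \<in> K \<Longrightarrow> y \<in> K \<Longrightarrow> x * y \<in> K"
  shows "roots_of_unity K = {z. z ^ w_ord K = 1}"
  unfolding w_ord_def
proof (rule finite_mult_closed_eq_roots_unity)
  show "1 \<in> roots_of_unity K" using assms(2) by (rule one_mem_roots_of_unity)
  show "0 \<notin> roots_of_unity K" by (auto simp: roots_of_unity_def power_0_left)
qed (use assms roots_of_unity_mult_closed in auto)

lemma w_ord_pos: "finite (roots_of_unity K) \<Longrightarrow> 1 \<in> K \<Longrightarrow> w_ord K > 0"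
  using one_mem_roots_of_unity unfolding w_ord_def by (auto simp: card_gt_0_iff)

lemma cis_mem_iff_dvd_w_ord:
  fixes m :: nat
  assumes "finite (roots_of_unity K)" "1 \<in> K" "\<And>x y. x \<in> K \<Longrightarrow> y \<in> K \<Longrightarrow> x * y \<in> K"
    and m: "m > 0"
  shows "cis (2 * pi / m) \<in> K \<longleftrightarrow> m dvd w_ord K"
proof -
  have "cis (2 * pi / m) \<in> K \<longleftrightarrow> cis (2 * pi / m) \<in> roots_of_unity K"
    using cis_pow_eq_1_iff[OF m, of m] m by (auto simp: roots_of_unity_def)
  also have "\<dots> \<longleftrightarrow> m dvd w_ord K"
    using cis_pow_eq_1_iff[OF m] by (simp add: roots_of_unity_eq_roots_w_ord[OF assms(1-3)])
  finally show ?thesis .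
qed

lemma subfield_power_mem: "is_subfield K \<Longrightarrow> x \<in> K \<Longrightarrow> x ^ n \<in> K"
  by (induction n) (auto simp: is_subfield_def)

lemma field_aut_power:
  assumes "is_subfield K" "field_aut K \<sigma>" "x \<in> K"
  shows "\<sigma> (x ^ n) = \<sigma> x ^ n"
proof (induction n)
  case (Suc n)
  then show ?case
    using assms subfield_power_mem[OF assms(1,3), of n] by (simp add: field_aut_def)
qed (use assms(2) in \<open>simp add: field_aut_def\<close>)

lemma field_aut_cis_pow:
  fixes N :: nat
  assumes "is_subfield K" "field_aut K \<sigma>" "cis (2 * pi / N) \<in> K" "N > 0"
  obtains k where "\<sigma> (cis (2 * pi / N)) = cis (2 * pi / N) ^ k"
proof (rule root_unity_eq_cis_pow[OF \<open>N > 0\<close>])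
  have "\<sigma> (cis (2 * pi / N)) ^ N = \<sigma> (cis (2 * pi / N) ^ N)"
    using field_aut_power[OF assms(1-3)] by simp
  also have "\<dots> = 1" using assms(2,4) cis_pow_eq_1_iff[of N N] by (simp add: field_aut_def)
  finally show "\<sigma> (cis (2 * pi / N)) ^ N = 1" .
qed (rule that)

lemma one_mem_fixed_field: "is_subfield K \<Longrightarrow> \<forall>\<sigma>\<in>H. field_aut K \<sigma> \<Longrightarrow> 1 \<in> fixed_field K H"
  by (auto simp: fixed_field_def is_subfield_def field_aut_def)

lemma fixed_field_mult_closed:
  assumes "is_subfield K" "\<forall>\<sigma>\<in>H. field_aut K \<sigma>" "x \<in> fixed_field K H" "y \<in> fixed_field K H"
  shows "x * y \<in> fixed_field K H"
proof -
  have "x \<in> K" "y \<in> K" using assms(3,4) by (auto simp: fixed_field_def)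
  have "\<sigma> (x * y) = x * y" if "\<sigma> \<in> H" for \<sigma>
  proof -
    have "\<sigma> (x * y) = \<sigma> x * \<sigma> y"
      using assms(2) that \<open>x \<in> K\<close> \<open>y \<in> K\<close> by (simp add: field_aut_def)
    also have "\<dots> = x * y" using assms(3,4) that by (auto simp: fixed_field_def)
    finally show ?thesis .
  qed
  then show ?thesis using assms(1) \<open>x \<in> K\<close> \<open>y \<in> K\<close> by (auto simp: fixed_field_def is_subfield_def)
qed

definition aut_monoid :: "(complex \<Rightarrow> complex) set \<Rightarrow> (complex \<Rightarrow> complex) monoid" where
  "aut_monoid H = \<lparr>carrier = H, mult = (\<circ>), one = id\<rparr>"

lemma funpow_card_subgroup:
  assumes "subgroup_of H G" "\<sigma> \<in> H"
  shows "\<sigma> ^^ card H = id"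
proof -
  have "group (aut_monoid H)"
    by (rule groupI) (use assms(1) in \<open>auto simp: aut_monoid_def subgroup_of_def comp_assoc\<close>)
  moreover have "x [^]\<^bsub>aut_monoid H\<^esub> n = x ^^ n" for x and n :: nat
    by (induction n) (simp_all add: aut_monoid_def funpow_Suc_right del: funpow.simps)
  ultimately show ?thesis
    using group.pow_order_eq_1[of "aut_monoid H" \<sigma>] assms(2)
    by (simp add: Coset.order_def aut_monoid_def)
qed

text \<open>Peel off one root at a time: multiplying by a monic linear factor whose root lies in the closed
  unit disc at most doubles the largest coefficient.\<close>
lemma coeff_bound_roots_in_unit_disc:
  fixes p :: "complex poly"
  assumes "p \<noteq> 0" "\<And>z. poly p z = 0 \<Longrightarrow> norm z \<le> 1"
  shows "norm (coeff p k) \<le> 2 ^ degree p * norm (lead_coeff p)"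
  using assms
proof (induction "degree p" arbitrary: p k)
  case 0
  then obtain c where "p = [:c:]" by (metis degree_eq_zeroE)
  then show ?case by (cases k) auto
next
  case (Suc n)
  have "\<not> constant (poly p)" using Suc.hyps(2) constant_degree by (metis nat.distinct(1))
  then obtain z where z: "poly p z = 0" using fundamental_theorem_of_algebra by blast
  then obtain r where pr: "p = [:-z, 1:] * r" by (metis poly_eq_0_iff_dvd dvdE)
  have "r \<noteq> 0" using Suc.prems pr by auto
  have "degree p = degree [:-z, 1:] + degree r"
    unfolding pr by (rule degree_mult_eq) (use \<open>r \<noteq> 0\<close> in auto)
  then have deg: "n = degree r" using Suc.hyps(2) by simp
  have lc: "lead_coeff p = lead_coeff r" unfolding pr by (subst lead_coeff_mult) simp
  have IH: "norm (coeff r i) \<le> 2 ^ n * norm (lead_coeff r)" for i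
    using Suc.hyps(1)[OF deg \<open>r \<noteq> 0\<close>] Suc.prems(2) pr deg by auto
  have "coeff p k = - z * coeff r k + (if k = 0 then 0 else coeff r (k - 1))"
    by (cases k) (simp_all add: pr)
  then have "norm (coeff p k) \<le> norm z * norm (coeff r k) + norm (if k = 0 then 0 else coeff r (k - 1))"
    by (metis norm_triangle_ineq norm_mult norm_minus_cancel)
  also have "\<dots> \<le> 1 * (2 ^ n * norm (lead_coeff r)) + 2 ^ n * norm (lead_coeff r)"
    using Suc.prems(2)[OF z] IH by (intro add_mono mult_mono) auto
  also have "\<dots> = 2 ^ degree p * norm (lead_coeff p)" using Suc.hyps(2)[symmetric] lc by simp
  finally show ?case .
qed

lemma lead_coeff_monom_minus_1:
  fixes N :: nat
  assumes "N > 0"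
  shows "lead_coeff (monom 1 N - 1 :: 'a::comm_ring_1 poly) = 1"
proof -
  have c: "coeff (monom 1 N - 1 :: 'a poly) N = 1" using assms by (simp add: coeff_monom)
  have "degree (monom 1 N - 1 :: 'a poly) \<le> N"
    by (intro degree_diff_le) (auto intro: degree_monom_le)
  moreover have "degree (monom 1 N - 1 :: 'a poly) \<ge> N" using c by (intro le_degree) simp
  ultimately show ?thesis using c by simp
qed

lemma monom_minus_1_nonzero:
  fixes N :: nat
  assumes "N > 0"
  shows "(monom 1 N - 1 :: 'a::comm_ring_1 poly) \<noteq> 0"
proof
  assume zero: "(monom 1 N - 1 :: 'a poly) = 0"
  have "(1::'a) = lead_coeff (monom 1 N - 1 :: 'a poly)"
    using lead_coeff_monom_minus_1[OF assms] by (rule sym)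
  also have "\<dots> = 0" by (subst zero) simp
  finally show False by simp
qed

lemma coeff_bound_dvd_monom_minus_1:
  fixes P :: "int poly"
  assumes N: "N > 0" and dvd: "P dvd monom 1 N - 1"
  shows "\<bar>coeff P k\<bar> \<le> 2 ^ degree P"
proof -
  obtain R where XR: "monom 1 N - 1 = P * R" using dvd by (elim dvdE)
  have "lead_coeff (P * R) = 1" unfolding XR[symmetric] by (rule lead_coeff_monom_minus_1[OF N])
  then have "lead_coeff P * lead_coeff R = 1" by (simp only: lead_coeff_mult)
  then have "\<bar>lead_coeff P\<bar> = 1" using abs_zmult_eq_1[of "lead_coeff P" "lead_coeff R"] by simp
  then have "\<bar>real_of_int (lead_coeff P)\<bar> = 1" by (simp flip: of_int_abs)
  have "P \<noteq> 0" using XR monom_minus_1_nonzero[OF N] by auto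
  have "norm z \<le> 1" if "poly (of_int_poly P :: complex poly) z = 0" for z
  proof -
    have "poly (of_int_poly (monom 1 N - 1) :: complex poly) z = 0"
      using that by (simp add: XR of_int_poly_hom.hom_mult)
    then have "norm z ^ N = 1 ^ N"
      by (simp add: of_int_poly_hom.hom_minus of_int_hom.map_poly_hom_monom poly_monom flip: norm_power)
    from power_eq_imp_eq_base[OF this norm_ge_zero zero_le_one N] show ?thesis by simp
  qed
  then have "norm (coeff (of_int_poly P :: complex poly) k)
      \<le> 2 ^ degree P * norm (lead_coeff (of_int_poly P :: complex poly))"
    using coeff_bound_roots_in_unit_disc[of "of_int_poly P" k] \<open>P \<noteq> 0\<close> by simp
  then have "real_of_int \<bar>coeff P k\<bar> \<le> real_of_int (2 ^ degree P)"
    using \<open>\<bar>real_of_int (lead_coeff P)\<bar> = 1\<close> by simp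
  then show ?thesis by (simp only: of_int_le_iff)
qed

lemma finite_bounded_int_polys: "finite {P::int poly. degree P \<le> d \<and> (\<forall>k. \<bar>coeff P k\<bar> \<le> B)}"
proof -
  let ?A = "{P::int poly. degree P \<le> d \<and> (\<forall>k. \<bar>coeff P k\<bar> \<le> B)}"
  let ?coeffs = "\<lambda>P. map (coeff P) [0..<Suc d]"
  have "?coeffs ` ?A \<subseteq> {xs. set xs \<subseteq> {-B..B} \<and> length xs = Suc d}"
    by (auto simp: abs_le_iff) (meson minus_le_iff)+
  then have "finite (?coeffs ` ?A)"
    by (rule finite_subset) (rule finite_lists_length_eq, simp)
  moreover have "inj_on ?coeffs ?A"
  proof (rule inj_onI)
    fix P Q assume P: "P \<in> ?A" and Q: "Q \<in> ?A" and eq: "?coeffs P = ?coeffs Q"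
    have "\<forall>i\<in>{0..<Suc d}. coeff P i = coeff Q i" using eq by (simp only: map_eq_conv set_upt)
    moreover have "coeff P i = coeff Q i" if "i > d" for i
      using P Q that by (simp add: coeff_eq_0)
    ultimately show "P = Q" by (intro poly_eqI) (metis atLeastLessThan_iff less_Suc_eq_le not_le zero_le)
  qed
  ultimately show ?thesis using finite_imageD by blast
qed

text \<open>Among the integer factors of X^N - 1 vanishing at x take one, P, of least degree; by Gauss's
  lemma the rational factorisation of P through gcd(P, q) lifts to the integers, so minimality forces
  deg P \<le> deg gcd(P, q) \<le> deg q.\<close>
lemma root_unity_int_factor_degree_le:
  fixes x :: complex and q :: "rat poly"
  assumes N: "N > 0" "x ^ N = 1" and q: "q \<noteq> 0" "poly (map_poly of_rat q) x = 0"
  obtains P :: "int poly"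
  where "P dvd monom 1 N - 1" "degree P \<le> degree q" "poly (of_int_poly P) x = 0"
proof -
  define D where "D = {P::int poly. P dvd monom 1 N - 1 \<and> poly (of_int_poly P) x = 0}"
  have "monom 1 N - 1 \<in> D" using N by (simp add: D_def hom_distribs poly_monom)
  then obtain P where PD: "P \<in> D" and Pmin: "\<And>Q. Q \<in> D \<Longrightarrow> degree P \<le> degree Q"
    using ex_has_least_nat[of "\<lambda>P. P \<in> D" _ degree] by blast
  have "P \<noteq> 0" using PD monom_minus_1_nonzero[OF N(1)] by (auto simp: D_def)
  define f where "f = gcd (of_int_poly P) q"
  have "f \<noteq> 0" using \<open>P \<noteq> 0\<close> by (simp add: f_def)
  have "field_hom' (of_rat :: rat \<Rightarrow> complex)" by unfold_locales
  then have "map_poly of_rat f = gcd (of_int_poly P) (map_poly (of_rat :: rat \<Rightarrow> complex) q)"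
    by (simp add: f_def field_hom'.map_poly_gcd map_poly_map_poly o_def)
  then have fx: "poly (map_poly of_rat f) x = 0"
    using PD q(2) by (simp add: D_def poly_eq_0_iff_dvd)
  obtain h where Pfh: "of_int_poly P = f * h" by (metis f_def gcd_dvd1 dvdE)
  then obtain g' h' where gh: "P = g' * h'" "degree g' = degree f" "degree h' = degree h"
    using rat_to_int_factor by blast
  have "h \<noteq> 0" using Pfh \<open>P \<noteq> 0\<close> by auto
  have "poly (of_int_poly g' :: complex poly) x = 0 \<or> poly (of_int_poly h' :: complex poly) x = 0"
    using PD gh(1) by (simp add: D_def hom_distribs)
  moreover have "g' dvd monom 1 N - 1" "h' dvd monom 1 N - 1"
    using PD dvd_trans[of _ P "monom 1 N - 1"] by (auto simp: D_def gh(1))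
  ultimately consider "g' \<in> D" | "h' \<in> D" by (auto simp: D_def)
  then show ?thesis
  proof cases
    case 1
    then have "degree P \<le> degree f" using Pmin gh(2) by fastforce
    also have "\<dots> \<le> degree q" using q(1) by (simp add: f_def dvd_imp_degree_le)
    finally show ?thesis using that PD by (auto simp: D_def)
  next
    case 2
    have "degree P = degree f + degree h"
      using arg_cong[OF Pfh, of degree] \<open>f \<noteq> 0\<close> \<open>h \<noteq> 0\<close> by (simp add: degree_mult_eq)
    then have "degree f = 0" using Pmin[OF 2] gh(3) by simp
    then obtain c where "f = [:c:]" by (metis degree_eq_zeroE)
    then show ?thesis using \<open>f \<noteq> 0\<close> fx by simp
  qed
qed

interpretation rat_complex: vector_space "\<lambda>(r::rat) (z::complex). of_rat r * z"
  by unfold_locales (simp_all add: algebra_simps of_rat_add of_rat_mult)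

lemma algebraic_if_powers_in_span:
  fixes x :: complex
  assumes B: "finite B" and span: "\<And>i. x ^ i \<in> rat_complex.span B"
  shows "\<exists>q::rat poly. q \<noteq> 0 \<and> degree q \<le> card B \<and> poly (map_poly of_rat q) x = 0"
proof (cases "inj_on (\<lambda>i. x ^ i) {..card B}")
  case False
  then obtain i j where ij: "i \<le> card B" "j \<le> card B" "i \<noteq> j" "x ^ i = x ^ j"
    by (auto simp: inj_on_def)
  define q where "q = (monom 1 i - monom 1 j :: rat poly)"
  have "coeff q i = 1" using ij by (simp add: q_def coeff_monom)
  moreover have "degree q \<le> card B" unfolding q_def
    by (intro degree_diff_le) (use ij in \<open>auto intro: order.trans[OF degree_monom_le]\<close>)
  moreover have "map_poly (of_rat :: rat \<Rightarrow> complex) q = monom 1 i - monom 1 j"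
    by (rule poly_eqI) (simp add: q_def coeff_map_poly coeff_monom of_rat_diff)
  then have "poly (map_poly of_rat q) x = 0" using ij by (simp add: poly_monom)
  ultimately show ?thesis by (metis coeff_0 zero_neq_one)
next
  case True
  define V where "V = (\<lambda>i. x ^ i) ` {..card B}"
  have "card V = Suc (card B)" using True by (simp add: V_def card_image)
  moreover have "V \<subseteq> rat_complex.span B" using span by (auto simp: V_def)
  ultimately have "rat_complex.dependent V"
    using rat_complex.independent_span_bound[OF B] by fastforce
  then obtain u where u: "\<exists>v\<in>V. u v \<noteq> 0" "(\<Sum>v\<in>V. of_rat (u v) * v) = 0"
    using rat_complex.dependent_finite[of V] by (auto simp: V_def)
  define q where "q = (\<Sum>i\<le>card B. monom (u (x ^ i)) i)"
  have cq: "coeff q k = (if k \<le> card B then u (x ^ k) else 0)" for k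
    by (simp add: q_def coeff_sum coeff_monom)
  obtain i where "i \<le> card B" "u (x ^ i) \<noteq> 0" using u(1) by (auto simp: V_def)
  then have "q \<noteq> 0" using cq[of i] by auto
  moreover have "degree q \<le> card B" by (rule degree_le) (simp add: cq)
  moreover have "map_poly of_rat q = (\<Sum>i\<le>card B. monom (of_rat (u (x ^ i)) :: complex) i)"
    by (rule poly_eqI) (simp add: coeff_map_poly cq coeff_sum coeff_monom)
  then have "poly (map_poly of_rat q) x = (\<Sum>v\<in>V. of_rat (u v) * v)"
    by (simp add: poly_sum poly_monom V_def sum.reindex[OF True])
  ultimately show ?thesis using u(2) by metis
qed

lemma number_field_algebraic_bounded_degree:
  assumes "number_field L"
  obtains d
  where "\<And>x. x \<in> L \<Longrightarrow> \<exists>q::rat poly. q \<noteq> 0 \<and> degree q \<le> d \<and> poly (map_poly of_rat q) x = 0"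
proof -
  obtain B where B: "finite B" "\<forall>x\<in>L. \<exists>c. (\<forall>b\<in>B. c b \<in> \<rat>) \<and> x = (\<Sum>b\<in>B. c b * b)"
    using assms by (auto simp: number_field_def)
  have "L \<subseteq> rat_complex.span B"
  proof
    fix x assume "x \<in> L"
    then obtain c where c: "\<forall>b\<in>B. c b \<in> \<rat>" "x = (\<Sum>b\<in>B. c b * b)" using B(2) by blast
    then obtain r where "\<forall>b\<in>B. c b = of_rat (r b)" by (metis Rats_cases)
    then have "x = (\<Sum>b\<in>B. of_rat (r b) * b)" using c(2) by simp
    then show "x \<in> rat_complex.span B" by (simp add: rat_complex.span_finite[OF B(1)])
  qed
  moreover have "is_subfield L" using assms by (simp add: number_field_def)
  ultimately show ?thesis
    using that[of "card B"] algebraic_if_powers_in_span[OF B(1)] subfield_power_mem by blast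
qed

lemma finite_roots_of_unity_number_field:
  assumes "number_field L"
  shows "finite (roots_of_unity L)"
proof -
  obtain d
    where d: "\<And>x. x \<in> L \<Longrightarrow> \<exists>q::rat poly. q \<noteq> 0 \<and> degree q \<le> d \<and> poly (map_poly of_rat q) x = 0"
    using number_field_algebraic_bounded_degree[OF assms] by blast
  define S where "S = {P::int poly. degree P \<le> d \<and> (\<forall>k. \<bar>coeff P k\<bar> \<le> 2 ^ d)} - {0}"
  have "roots_of_unity L \<subseteq> (\<Union>P\<in>S. {z. poly (of_int_poly P :: complex poly) z = 0})"
  proof
    fix x assume "x \<in> roots_of_unity L"
    then obtain N where x: "x \<in> L" "N > 0" "x ^ N = 1" by (auto simp: roots_of_unity_def)
    obtain q where q: "q \<noteq> 0" "degree q \<le> d" "poly (map_poly of_rat q) x = 0" using d x(1) by blast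
    obtain P :: "int poly"
      where P: "P dvd monom 1 N - 1" "degree P \<le> degree q" "poly (of_int_poly P) x = 0"
      using root_unity_int_factor_degree_le[OF x(2,3) q(1,3)] .
    have "degree P \<le> d" using P(2) q(2) by linarith
    have "\<bar>coeff P k\<bar> \<le> 2 ^ d" for k
    proof -
      have "\<bar>coeff P k\<bar> \<le> 2 ^ degree P" by (rule coeff_bound_dvd_monom_minus_1[OF x(2) P(1)])
      also have "(2::int) ^ degree P \<le> 2 ^ d" using \<open>degree P \<le> d\<close> by (rule power_increasing) simp
      finally show ?thesis .
    qed
    moreover have "P \<noteq> 0" using P(1) monom_minus_1_nonzero[OF x(2)] by auto
    ultimately show "x \<in> (\<Union>P\<in>S. {z. poly (of_int_poly P :: complex poly) z = 0})"
      using \<open>degree P \<le> d\<close> P(3) by (auto simp: S_def)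
  qed
  moreover have "finite S" unfolding S_def using finite_bounded_int_polys by blast
  then have "finite (\<Union>P\<in>S. {z. poly (of_int_poly P :: complex poly) z = 0})"
    by (intro finite_UN_I) (auto simp: S_def intro!: poly_roots_finite)
  ultimately show ?thesis using finite_subset by blast
qed

text \<open>k^r - 1 = (k - 1)(1 + k + ... + k^(r-1)), and the second factor is congruent to r, a unit
  mod p.\<close>
lemma cong_1_lift_prime_power:
  fixes k r :: nat
  assumes p: "prime p" and k1: "[k = 1] (mod p)" and kr: "[k ^ r = 1] (mod p ^ a)"
    and r: "\<not> p dvd r"
  shows "[k = 1] (mod p ^ a)"
proof (cases "a = 0")
  case False
  have "[(\<Sum>i<r. int k ^ i) = (\<Sum>i<r. 1)] (mod int p)"
    using cong_pow[OF k1[folded cong_int_iff]] by (intro cong_sum) simp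
  then have not_dvd: "\<not> int p dvd (\<Sum>i<r. int k ^ i)"
    using r by (simp add: cong_dvd_iff)
  have dvd: "int p ^ a dvd (\<Sum>i<r. int k ^ i) * (int k - 1)"
    using kr by (simp add: power_diff_1_eq cong_int_iff[symmetric] cong_iff_dvd_diff mult.commute)
  have "prime_elem (int p)" using p by simp
  from prime_power_dvd_multD[OF this dvd _ not_dvd] False have "int p ^ a dvd int k - 1" by simp
  then show ?thesis by (simp add: cong_int_iff[symmetric] cong_iff_dvd_diff)
qed simp

lemma primroot_discrete_log:
  assumes p: "prime p" and g: "residue_primroot p g" and k: "\<not> p dvd k"
  obtains j where "[g ^ j = k] (mod p)"
proof -
  have p1: "p > 1" using p prime_gt_1_nat by blast
  have "k mod p > 0" "k mod p \<le> p" using k p1 by (simp_all add: mod_greater_zero_iff_not_dvd)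
  then have "k mod p \<in> totatives p"
    unfolding totatives_def using prime_imp_coprime[OF p k] p1 by (simp add: Rings.coprime_commute)
  then have "k mod p \<in> (\<lambda>i. g ^ i mod p) ` {..<totient p}"
    using residue_primroot_is_generator[OF p1 g] by (simp add: bij_betw_def)
  then obtain j where "k mod p = g ^ j mod p" by auto
  then show ?thesis using that by (simp add: cong_def)
qed

lemma sum_character_subgroup:
  fixes \<omega> :: "(complex \<Rightarrow> complex) \<Rightarrow> 'a::idom"
  assumes sub: "subgroup_of H G" and fin: "finite H"
    and hom: "\<And>\<sigma> \<tau>. \<sigma> \<in> H \<Longrightarrow> \<tau> \<in> H \<Longrightarrow> \<omega> (\<sigma> \<circ> \<tau>) = \<omega> \<sigma> * \<omega> \<tau>"
  shows "(\<Sum>h\<in>H. \<omega> h) = (if \<forall>h\<in>H. \<omega> h = 1 then of_nat (card H) else 0)"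
proof (cases "\<forall>h\<in>H. \<omega> h = 1")
  case False
  then obtain h0 where h0: "h0 \<in> H" "\<omega> h0 \<noteq> 1" by blast
  then obtain h0' where "h0' \<in> H" "h0' \<circ> h0 = id" using sub by (auto simp: subgroup_of_def)
  then have inj: "inj_on ((\<circ>) h0) H"
    by (intro inj_on_inverseI[where g = "(\<circ>) h0'"]) (simp flip: comp_assoc)
  have "(\<circ>) h0 ` H = H"
    using endo_inj_surj[OF fin _ inj] sub h0(1) by (auto simp: subgroup_of_def)
  then have "(\<Sum>h\<in>H. \<omega> h) = (\<Sum>h\<in>H. \<omega> (h0 \<circ> h))"
    using sum.reindex[OF inj, of \<omega>] by simp
  also have "\<dots> = \<omega> h0 * (\<Sum>h\<in>H. \<omega> h)"
    using h0(1) hom by (simp add: sum_distrib_left)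
  finally have "(1 - \<omega> h0) * (\<Sum>h\<in>H. \<omega> h) = 0" by (simp add: algebra_simps)
  then have "(\<Sum>h\<in>H. \<omega> h) = 0" using h0(2) by simp
  then show ?thesis by (simp only: False if_False)
qed simp

lemma sum_norm_idem_character:
  fixes \<omega> :: "(complex \<Rightarrow> complex) \<Rightarrow> 'a::field_char_0"
  assumes sub: "subgroup_of H G" and fin: "finite G"
    and hom: "\<And>\<sigma> \<tau>. \<sigma> \<in> H \<Longrightarrow> \<tau> \<in> H \<Longrightarrow> \<omega> (\<sigma> \<circ> \<tau>) = \<omega> \<sigma> * \<omega> \<tau>"
  shows "(\<Sum>g\<in>G. of_rat (norm_idem H g) * \<omega> g) = (if \<forall>h\<in>H. \<omega> h = 1 then 1 else 0)"
proof -
  have HG: "H \<subseteq> G" and "id \<in> H" using sub by (auto simp: subgroup_of_def)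
  then have finH: "finite H" and "card H \<noteq> 0" using fin finite_subset by (auto simp: card_eq_0_iff)
  have "(\<Sum>g\<in>G. of_rat (norm_idem H g) * \<omega> g)
      = (\<Sum>g\<in>G. if g \<in> H then \<omega> g / of_nat (card H) else 0)"
    by (rule sum.cong) (auto simp: norm_idem_def of_rat_divide)
  also have "\<dots> = (\<Sum>g\<in>G \<inter> H. \<omega> g / of_nat (card H))"
    by (rule sum.inter_restrict[symmetric, OF fin])
  also have "\<dots> = (\<Sum>g\<in>H. \<omega> g) / of_nat (card H)"
    using HG by (simp add: Int_absorb1 sum_divide_distrib)
  also have "\<dots> = (if \<forall>h\<in>H. \<omega> h = 1 then 1 else 0)"
    using sum_character_subgroup[where \<omega> = \<omega>, OF sub finH hom] \<open>card H \<noteq> 0\<close>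
    by (cases "\<forall>h\<in>H. \<omega> h = 1") simp_all
  finally show ?thesis .
qed

lemma norm_idem_relation_character:
  fixes \<omega> :: "(complex \<Rightarrow> complex) \<Rightarrow> 'a::field_char_0"
  assumes fin: "finite G" and S: "S \<subseteq> {H. subgroup_of H G}"
    and rel: "\<forall>g\<in>G. (\<Sum>H\<in>S. of_int (n H) * norm_idem H g) = 0"
    and hom: "\<And>\<sigma> \<tau>. \<sigma> \<in> G \<Longrightarrow> \<tau> \<in> G \<Longrightarrow> \<omega> (\<sigma> \<circ> \<tau>) = \<omega> \<sigma> * \<omega> \<tau>"
  shows "(\<Sum>H\<in>S. n H * (if \<forall>h\<in>H. \<omega> h = 1 then 1 else 0)) = 0"
proof -
  have char: "(\<Sum>g\<in>G. of_rat (norm_idem H g) * \<omega> g) = (if \<forall>h\<in>H. \<omega> h = 1 then 1 else 0)"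
    if "H \<in> S" for H
  proof -
    have sub: "subgroup_of H G" using S that by blast
    then have "H \<subseteq> G" by (simp add: subgroup_of_def)
    show ?thesis
      by (rule sum_norm_idem_character[where \<omega> = \<omega>, OF sub fin]) (use \<open>H \<subseteq> G\<close> hom in blast)
  qed
  have "(of_int (\<Sum>H\<in>S. n H * (if \<forall>h\<in>H. \<omega> h = 1 then 1 else 0)) :: 'a)
      = (\<Sum>H\<in>S. of_int (n H) * of_int (if \<forall>h\<in>H. \<omega> h = 1 then 1 else 0))"
    by (simp only: of_int_sum of_int_mult)
  also have "\<dots> = (\<Sum>H\<in>S. of_int (n H) * (\<Sum>g\<in>G. of_rat (norm_idem H g) * \<omega> g))"
    using char by (intro sum.cong refl) simp
  also have "\<dots> = (\<Sum>H\<in>S. \<Sum>g\<in>G. of_int (n H) * of_rat (norm_idem H g) * \<omega> g)"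
    by (simp add: sum_distrib_left mult.assoc)
  also have "\<dots> = (\<Sum>g\<in>G. \<Sum>H\<in>S. of_int (n H) * of_rat (norm_idem H g) * \<omega> g)"
    by (rule sum.swap)
  also have "\<dots> = (\<Sum>g\<in>G. of_rat (\<Sum>H\<in>S. of_int (n H) * norm_idem H g) * \<omega> g)"
    by (simp add: of_rat_sum of_rat_mult sum_distrib_right)
  also have "\<dots> = 0" using rel by simp
  finally show ?thesis by (simp only: of_int_eq_0_iff)
qed

locale galois_roots_of_unity =
  fixes L :: "complex set" and G :: "(complex \<Rightarrow> complex) set" and p :: nat
  assumes number_field: "number_field L" and aut_group: "aut_group L G"
    and prime: "prime p" and p_dvd_w_ord: "p dvd w_ord L"
begin

definition a :: nat where "a = multiplicity p (w_ord L)"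

definition \<zeta> :: complex where "\<zeta> = cis (2 * pi / real (p ^ a))"

definition \<eta> :: complex where "\<eta> = cis (2 * pi / real p)"

lemma subfield: "is_subfield L"
  using number_field by (simp add: number_field_def)

lemma one_mem: "1 \<in> L" and mult_mem: "x \<in> L \<Longrightarrow> y \<in> L \<Longrightarrow> x * y \<in> L"
  using subfield by (auto simp: is_subfield_def)

lemma finite_G: "finite G" and field_aut: "\<sigma> \<in> G \<Longrightarrow> field_aut L \<sigma>"
  and comp_mem: "\<sigma> \<in> G \<Longrightarrow> \<tau> \<in> G \<Longrightarrow> \<sigma> \<circ> \<tau> \<in> G"
  using aut_group by (auto simp: aut_group_def)

lemma p_gt_1: "p > 1"
  using prime prime_gt_1_nat by blast

lemma w_ord_L_pos: "w_ord L > 0"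
  using w_ord_pos[OF finite_roots_of_unity_number_field[OF number_field] one_mem] .

lemma cis_mem_iff: "(m::nat) > 0 \<Longrightarrow> cis (2 * pi / m) \<in> L \<longleftrightarrow> m dvd w_ord L"
  by (rule cis_mem_iff_dvd_w_ord[OF finite_roots_of_unity_number_field[OF number_field] one_mem mult_mem])

lemma a_pos: "a > 0"
proof -
  have "p ^ 1 dvd w_ord L" using p_dvd_w_ord by simp
  then have "1 \<le> multiplicity p (w_ord L)" using w_ord_L_pos p_gt_1 by (intro multiplicity_geI) auto
  then show ?thesis by (simp add: a_def)
qed

lemma zeta_mem: "\<zeta> \<in> L"
  unfolding \<zeta>_def using p_gt_1
  by (subst cis_mem_iff) (auto simp: a_def multiplicity_dvd simp del: of_nat_power)

lemma eta_mem: "\<eta> \<in> L"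
  unfolding \<eta>_def using p_gt_1 p_dvd_w_ord by (subst cis_mem_iff) auto

lemma eta_eq_zeta_power: "\<eta> = \<zeta> ^ p ^ (a - 1)"
proof -
  have "p ^ a = p * p ^ (a - 1)" using a_pos by (simp flip: power_Suc)
  then have "real (p ^ (a - 1)) * (2 * pi / p ^ a) = 2 * pi / p" using p_gt_1 by (simp add: field_simps)
  then show ?thesis by (simp add: \<zeta>_def \<eta>_def DeMoivre)
qed

lemma zeta_power_eq_iff: "\<zeta> ^ i = \<zeta> ^ j \<longleftrightarrow> [i = j] (mod p ^ a)"
  unfolding \<zeta>_def using p_gt_1 by (intro cis_pow_cong_iff) simp

lemma eta_power_eq_iff: "\<eta> ^ i = \<eta> ^ j \<longleftrightarrow> [i = j] (mod p)"
  unfolding \<eta>_def using p_gt_1 by (intro cis_pow_cong_iff) simp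

lemma field_aut_zeta:
  assumes "\<sigma> \<in> G"
  obtains k where "\<sigma> \<zeta> = \<zeta> ^ k" "\<sigma> \<eta> = \<eta> ^ k"
proof -
  have "p ^ a > 0" using p_gt_1 by simp
  obtain k where k: "\<sigma> \<zeta> = \<zeta> ^ k"
    unfolding \<zeta>_def
    by (rule field_aut_cis_pow[OF subfield field_aut[OF assms] zeta_mem[unfolded \<zeta>_def] \<open>p ^ a > 0\<close>])
  moreover have "\<sigma> \<eta> = \<eta> ^ k"
    using field_aut_power[OF subfield field_aut[OF assms] zeta_mem] k
    by (simp add: eta_eq_zeta_power flip: power_mult) (simp add: mult.commute)
  ultimately show ?thesis by (rule that)
qed

lemma fixes_zeta_if_fixes_eta:
  assumes \<sigma>: "\<sigma> \<in> G" and r: "\<sigma> ^^ r = id" "\<not> p dvd r" and fixed: "\<sigma> \<eta> = \<eta>"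
  shows "\<sigma> \<zeta> = \<zeta>"
proof -
  obtain k where k: "\<sigma> \<zeta> = \<zeta> ^ k" "\<sigma> \<eta> = \<eta> ^ k" using field_aut_zeta[OF \<sigma>] .
  have "[k = 1] (mod p)" using k(2) fixed eta_power_eq_iff[of k 1] by simp
  have iter: "(\<sigma> ^^ m) \<zeta> = \<zeta> ^ (k ^ m)" for m
  proof (induction m)
    case (Suc m)
    then show ?case
      using field_aut_power[OF subfield field_aut[OF \<sigma>] zeta_mem] by (simp add: k(1) flip: power_mult)
  qed simp
  have "\<zeta> ^ (k ^ r) = \<zeta> ^ 1" using iter[of r] r(1) by simp
  then have "[k ^ r = 1] (mod p ^ a)" by (simp only: zeta_power_eq_iff)
  then have "[k = 1] (mod p ^ a)" by (rule cong_1_lift_prime_power[OF prime \<open>[k = 1] (mod p)\<close> _ r(2)])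
  then show ?thesis using k(1) zeta_power_eq_iff[of k 1] by simp
qed

lemma fixed_field_roots_of_unity:
  assumes "H \<subseteq> G"
  shows "finite (roots_of_unity (fixed_field L H))" and "1 \<in> fixed_field L H"
    and "\<And>x y. x \<in> fixed_field L H \<Longrightarrow> y \<in> fixed_field L H \<Longrightarrow> x * y \<in> fixed_field L H"
proof -
  have aut: "\<forall>\<sigma>\<in>H. field_aut L \<sigma>" using assms field_aut by blast
  have "roots_of_unity (fixed_field L H) \<subseteq> roots_of_unity L"
    by (auto simp: roots_of_unity_def fixed_field_def)
  then show "finite (roots_of_unity (fixed_field L H))"
    using finite_roots_of_unity_number_field[OF number_field] finite_subset by blast
  show "1 \<in> fixed_field L H" by (rule one_mem_fixed_field[OF subfield aut])
  show "\<And>x y. x \<in> fixed_field L H \<Longrightarrow> y \<in> fixed_field L H \<Longrightarrow> x * y \<in> fixed_field L H"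
    by (rule fixed_field_mult_closed[OF subfield aut])
qed

lemma cis_mem_fixed_field_iff:
  "H \<subseteq> G \<Longrightarrow> (m::nat) > 0 \<Longrightarrow>
    cis (2 * pi / m) \<in> fixed_field L H \<longleftrightarrow> m dvd w_ord (fixed_field L H)"
  by (rule cis_mem_iff_dvd_w_ord[OF fixed_field_roots_of_unity])

lemma w_ord_fixed_field_dvd:
  assumes "H \<subseteq> G"
  shows "w_ord (fixed_field L H) dvd w_ord L"
proof -
  define d where "d = w_ord (fixed_field L H)"
  have "d > 0" unfolding d_def by (rule w_ord_pos[OF fixed_field_roots_of_unity(1,2)[OF assms]])
  then have "cis (2 * pi / d) \<in> fixed_field L H"
    using cis_mem_fixed_field_iff[OF assms] by (simp add: d_def)
  then have "cis (2 * pi / d) \<in> L" by (simp add: fixed_field_def)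
  then show ?thesis using cis_mem_iff \<open>d > 0\<close> by (simp add: d_def)
qed

lemma multiplicity_w_ord_fixed_field:
  assumes sub: "subgroup_of H G" and p_ndvd: "\<not> p dvd card H"
  shows "multiplicity p (w_ord (fixed_field L H)) = (if \<forall>h\<in>H. h \<eta> = \<eta> then a else 0)"
proof -
  define d where "d = w_ord (fixed_field L H)"
  have HG: "H \<subseteq> G" using sub by (simp add: subgroup_of_def)
  have "d > 0" unfolding d_def by (rule w_ord_pos[OF fixed_field_roots_of_unity(1,2)[OF HG]])
  have fixed_iff: "x \<in> fixed_field L H \<longleftrightarrow> (\<forall>h\<in>H. h x = x)" if "x \<in> L" for x
    using that by (simp add: fixed_field_def)
  show ?thesis
  proof (cases "\<forall>h\<in>H. h \<eta> = \<eta>")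
    case True
    have "h \<zeta> = \<zeta>" if "h \<in> H" for h
    proof -
      have "h \<in> G" "h ^^ card H = id" "h \<eta> = \<eta>"
        using that HG funpow_card_subgroup[OF sub] True by auto
      then show ?thesis using fixes_zeta_if_fixes_eta p_ndvd by blast
    qed
    then have "p ^ a dvd d"
      using cis_mem_fixed_field_iff[OF HG, of "p ^ a"] fixed_iff[OF zeta_mem] p_gt_1
      by (simp add: d_def \<zeta>_def)
    then have "a \<le> multiplicity p d"
      using \<open>d > 0\<close> p_gt_1 by (intro multiplicity_geI) auto
    moreover have "multiplicity p d \<le> a"
      unfolding a_def d_def using w_ord_fixed_field_dvd[OF HG] w_ord_L_pos
      by (intro dvd_imp_multiplicity_le) auto
    ultimately show ?thesis using True by (simp add: d_def)
  next
    case False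
    then have "\<not> p dvd d"
      using cis_mem_fixed_field_iff[OF HG, of p] fixed_iff[OF eta_mem] p_gt_1
      by (simp add: d_def \<eta>_def)
    then show ?thesis
      unfolding d_def[symmetric] if_not_P[OF False] by (rule not_dvd_imp_multiplicity_0)
  qed
qed

lemma eta_image_primroot_power:
  assumes \<sigma>: "\<sigma> \<in> G" and g: "residue_primroot p g"
  obtains j where "\<sigma> \<eta> = \<eta> ^ (g ^ j)"
proof -
  obtain k where k: "\<sigma> \<eta> = \<eta> ^ k" using field_aut_zeta[OF \<sigma>] by blast
  have "\<not> p dvd k"
  proof
    assume "p dvd k"
    then have "\<sigma> \<eta> = \<sigma> 1"
      using k eta_power_eq_iff[of k 0] field_aut[OF \<sigma>] by (simp add: field_aut_def cong_0_iff)
    then have "\<eta> = 1"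
      using field_aut[OF \<sigma>] eta_mem one_mem by (auto simp: field_aut_def bij_betw_def inj_on_def)
    then show False using eta_power_eq_iff[of 1 0] p_gt_1 by (simp add: cong_def)
  qed
  then obtain j where "[g ^ j = k] (mod p)" using primroot_discrete_log[OF prime g] by blast
  then have "\<sigma> \<eta> = \<eta> ^ (g ^ j)" using k eta_power_eq_iff[of "g ^ j" k] by simp
  then show ?thesis by (rule that)
qed

text \<open>Each \<sigma> acts as \<eta> \<mapsto> \<eta>^(g^j) for a primitive root g mod p, and j is determined
  mod p - 1; so \<omega> \<sigma> = u^j, with u a primitive (p - 1)-th root of unity, is a character.\<close>
lemma eta_character:
  obtains \<omega> :: "(complex \<Rightarrow> complex) \<Rightarrow> complex"
  where "\<And>\<sigma> \<tau>. \<sigma> \<in> G \<Longrightarrow> \<tau> \<in> G \<Longrightarrow> \<omega> (\<sigma> \<circ> \<tau>) = \<omega> \<sigma> * \<omega> \<tau>"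
    and "\<And>\<sigma>. \<sigma> \<in> G \<Longrightarrow> \<omega> \<sigma> = 1 \<longleftrightarrow> \<sigma> \<eta> = \<eta>"
proof -
  obtain g where g: "residue_primroot p g" using prime_primitive_root_exists[OF p_gt_1 prime] by blast
  then have dlog_cong_iff: "[g ^ i = g ^ i'] (mod p) \<longleftrightarrow> [i = i'] (mod (p - 1))" for i i'
    using order_divides_expdiff[of p g] prime by (simp add: residue_primroot_def totient_prime)
  define j where "j \<sigma> = (SOME j. \<sigma> \<eta> = \<eta> ^ (g ^ j))" for \<sigma>
  have j: "\<sigma> \<eta> = \<eta> ^ (g ^ j \<sigma>)" if "\<sigma> \<in> G" for \<sigma>
    unfolding j_def by (rule someI_ex) (use eta_image_primroot_power[OF that g] in blast)
  define u where "u = cis (2 * pi / (p - 1))"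
  have u_power_eq_iff: "u ^ i = u ^ i' \<longleftrightarrow> [i = i'] (mod (p - 1))" for i i'
    unfolding u_def using p_gt_1 by (intro cis_pow_cong_iff) simp
  show ?thesis
  proof (rule that[of "\<lambda>\<sigma>. u ^ j \<sigma>"])
    fix \<sigma> \<tau> assume \<sigma>: "\<sigma> \<in> G" and \<tau>: "\<tau> \<in> G"
    have "\<eta> ^ (g ^ j (\<sigma> \<circ> \<tau>)) = \<sigma> (\<eta> ^ (g ^ j \<tau>))"
      using j[OF comp_mem[OF \<sigma> \<tau>]] j[OF \<tau>] by simp
    also have "\<dots> = \<eta> ^ (g ^ (j \<sigma> + j \<tau>))"
      using field_aut_power[OF subfield field_aut[OF \<sigma>] eta_mem] j[OF \<sigma>]
      by (simp add: power_add flip: power_mult)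
    finally have "[j (\<sigma> \<circ> \<tau>) = j \<sigma> + j \<tau>] (mod (p - 1))"
      by (simp only: eta_power_eq_iff dlog_cong_iff)
    then show "u ^ j (\<sigma> \<circ> \<tau>) = u ^ j \<sigma> * u ^ j \<tau>" by (simp only: u_power_eq_iff flip: power_add)
  next
    fix \<sigma> assume \<sigma>: "\<sigma> \<in> G"
    have "u ^ j \<sigma> = 1 \<longleftrightarrow> [j \<sigma> = 0] (mod (p - 1))" using u_power_eq_iff[of "j \<sigma>" 0] by simp
    also have "\<dots> \<longleftrightarrow> [g ^ j \<sigma> = g ^ 0] (mod p)" by (simp only: dlog_cong_iff)
    also have "\<dots> \<longleftrightarrow> \<sigma> \<eta> = \<eta>" using j[OF \<sigma>] eta_power_eq_iff[of "g ^ j \<sigma>" "g ^ 0"] by simp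
    finally show "u ^ j \<sigma> = 1 \<longleftrightarrow> \<sigma> \<eta> = \<eta>" .
  qed
qed

end

theorem proposition3p7:
  fixes L :: "complex set" and G :: "(complex \<Rightarrow> complex) set"
    and p :: nat and n :: "(complex \<Rightarrow> complex) set \<Rightarrow> int"
  assumes "number_field L"
    and "aut_group L G"
    and "prime p" and "p dvd w_ord L"
    and "\<forall>g\<in>G. (\<Sum>H\<in>{H. subgroup_of H G \<and> \<not> p dvd card H}.
                 of_int (n H) * norm_idem H g) = 0"
  shows "(\<Sum>H\<in>{H. subgroup_of H G \<and> \<not> p dvd card H}.
            n H * int (multiplicity p (w_ord (fixed_field L H)))) = 0"
proof -
  interpret galois_roots_of_unity L G p using assms(1-4) by unfold_locales
  define S where "S = {H. subgroup_of H G \<and> \<not> p dvd card H}"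
  obtain \<omega> :: "(complex \<Rightarrow> complex) \<Rightarrow> complex"
    where hom: "\<And>\<sigma> \<tau>. \<sigma> \<in> G \<Longrightarrow> \<tau> \<in> G \<Longrightarrow> \<omega> (\<sigma> \<circ> \<tau>) = \<omega> \<sigma> * \<omega> \<tau>"
      and ker: "\<And>\<sigma>. \<sigma> \<in> G \<Longrightarrow> \<omega> \<sigma> = 1 \<longleftrightarrow> \<sigma> \<eta> = \<eta>"
    using eta_character by blast
  have "n H * int (multiplicity p (w_ord (fixed_field L H)))
      = int a * (n H * (if \<forall>h\<in>H. \<omega> h = 1 then 1 else 0))" if "H \<in> S" for H
  proof -
    have "H \<subseteq> G" using that by (simp add: S_def subgroup_of_def)
    then have "(\<forall>h\<in>H. \<omega> h = 1) \<longleftrightarrow> (\<forall>h\<in>H. h \<eta> = \<eta>)" using ker by blast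
    then show ?thesis using multiplicity_w_ord_fixed_field that by (simp add: S_def)
  qed
  then have "(\<Sum>H\<in>S. n H * int (multiplicity p (w_ord (fixed_field L H))))
      = (\<Sum>H\<in>S. int a * (n H * (if \<forall>h\<in>H. \<omega> h = 1 then 1 else 0)))"
    by (rule sum.cong[OF refl])
  also have "\<dots> = int a * (\<Sum>H\<in>S. n H * (if \<forall>h\<in>H. \<omega> h = 1 then 1 else 0))"
    by (simp only: sum_distrib_left)
  also have "(\<Sum>H\<in>S. n H * (if \<forall>h\<in>H. \<omega> h = 1 then 1 else 0)) = 0"
    by (rule norm_idem_relation_character[OF finite_G _ _ hom]) (use assms(5) in \<open>auto simp: S_def\<close>)
  finally show ?thesis by (simp add: S_def)
qed

end
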